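(* For any choice of $(\hat\imath,\hat\jmath)\in\mathcal E$ defining $B_1$, the matrix $B_1$ is invertible, and $$\mathfrak d(i,\ell)=\frac{(e^{\mathsf T}B_1^{-1})_\ell}{(e^{\mathsf T}B_1^{-1})_i}\qquad\forall\,i,\ell\in\mathcal I.$$ Moreover $(e^{\mathsf T}B_1^{-1})_i>0$ for all $i\in\mathcal I$.
   Context: Network: $\mathcal I=\{1,\dots,I\}$, $\mathcal J=\{1,\dots,J\}$, edges $\mathcal E\subset\mathcal I\times\mathcal J$ with the bipartite graph $\mathcal G=(\mathcal I\cup\mathcal J,\mathcal E)$ a tree; $i\sim j$ iff $(i,j)\in\mathcal E$; $\mathcal J(i)=\{j:i\sim j\}$, $\mathcal I(j)=\{i:i\sim j\}$; $\mathbb R^{\mathcal G}$ denotes arrays in $\mathbb R^{I\times J}$ vanishing off $\mathcal E$. Service rates $\mu_{ij}>0$ for $i\sim j$. $e$ is the all-ones vector. Let $\mathcal D=\{(\alpha,\beta)\in\mathbb R^I\times\mathbb R^J:\sum_i\alpha_i=\sum_j\beta_j\}$ and $\Psi:\mathcal D\to\mathbb R^{\mathcal G}$ the unique linear map with $\sum_j\Psi_{ij}(\alpha,\beta)=\alpha_i$, $\sum_i\Psi_{ij}(\alpha,\beta)=\beta_j$. For $(\hat\imath,\hat\jmath)\in\mathcal E$, $B_1\in\mathbb R^{I\times I}$ and $B_2\in\mathbb R^{I\times J}$ are the unique matrices with column $\hat\jmath$ of $B_2$ zero and $\sum_{j\in\mathcal J(i)}\mu_{ij}\Psi_{ij}(\alpha,\beta)=(B_1\alpha+B_2\beta)_i$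 for all $i$ and $(\alpha,\beta)\in\mathcal D$. Gains: for $i\ne i'$ in $\mathcal I$ with unique shortest path $(i_1,j_1,i_2,\dots,j_{m-1},i_m)$ in $\mathcal G$ from $i=i_1$ to $i'=i_m$, $\mathfrak d(i,i'):=\prod_{k=1}^{m-1}\mu_{i_kj_k}/\mu_{i_{k+1}j_k}$; and $\mathfrak d(i,i):=1$. *)

theory Defs
  imports "HOL-Analysis.Analysis"
begin

text \<open>Vertices of the bipartite graph: Inl i for i in I, Inr j for j in J.
  The index sets I and J are the finite types 'i and 'j; the edge set is E.\<close>

fun adj :: "('i \<times> 'j) set \<Rightarrow> ('i + 'j) \<Rightarrow> ('i + 'j) \<Rightarrow> bool" where
  "adj E (Inl i) (Inr j) = ((i, j) \<in> E)"
| "adj E (Inr j) (Inl i) = ((i, j) \<in> E)"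
| "adj E _ _ = False"

definition is_walk :: "('i \<times> 'j) set \<Rightarrow> ('i + 'j) list \<Rightarrow> bool" where
  "is_walk E p \<longleftrightarrow> p \<noteq> [] \<and> (\<forall>k. Suc k < length p \<longrightarrow> adj E (p ! k) (p ! Suc k))"

definition graph_connected :: "('i \<times> 'j) set \<Rightarrow> bool" where
  "graph_connected E \<longleftrightarrow> (\<forall>u v. \<exists>p. is_walk E p \<and> hd p = u \<and> last p = v)"

definition is_cycle :: "('i \<times> 'j) set \<Rightarrow> ('i + 'j) list \<Rightarrow> bool" where
  "is_cycle E c \<longleftrightarrow> length c \<ge> 3 \<and> distinct c \<and> is_walk E c \<and> adj E (last c) (hd c)"

definition is_tree :: "('i \<times> 'j) set \<Rightarrow> bool" where
  "is_tree E \<longleftrightarrow> graph_connected E \<and> (\<nexists>c. is_cycle E c)"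

definition shortest_path :: "('i \<times> 'j) set \<Rightarrow> ('i + 'j) \<Rightarrow> ('i + 'j) \<Rightarrow> ('i + 'j) list \<Rightarrow> bool" where
  "shortest_path E u v p \<longleftrightarrow> is_walk E p \<and> hd p = u \<and> last p = v \<and>
     (\<forall>q. is_walk E q \<and> hd q = u \<and> last q = v \<longrightarrow> length p \<le> length q)"

fun path_gain :: "('i \<Rightarrow> 'j \<Rightarrow> real) \<Rightarrow> ('i + 'j) list \<Rightarrow> real" where
  "path_gain mu (Inl i # Inr j # Inl i' # rest) = mu i j / mu i' j * path_gain mu (Inl i' # rest)"
| "path_gain mu _ = 1"

definition gain :: "('i \<times> 'j) set \<Rightarrow> ('i \<Rightarrow> 'j \<Rightarrow> real) \<Rightarrow> 'i \<Rightarrow> 'i \<Rightarrow> real" where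
  "gain E mu i i' = (if i = i' then 1
     else path_gain mu (THE p. shortest_path E (Inl i) (Inl i') p))"

definition Dset :: "((real^'i) \<times> (real^'j)) set" where
  "Dset = {(a, b). (\<Sum>i\<in>UNIV. a $ i) = (\<Sum>j\<in>UNIV. b $ j)}"

definition Psi :: "('i \<times> 'j) set \<Rightarrow> real^'i \<Rightarrow> real^'j \<Rightarrow> 'i \<Rightarrow> 'j \<Rightarrow> real" where
  "Psi E a b = (THE x. (\<forall>i j. (i, j) \<notin> E \<longrightarrow> x i j = 0) \<and>
      (\<forall>i. (\<Sum>j\<in>UNIV. x i j) = a $ i) \<and> (\<forall>j. (\<Sum>i\<in>UNIV. x i j) = b $ j))"

definition B_pair :: "('i \<times> 'j) set \<Rightarrow> ('i \<Rightarrow> 'j \<Rightarrow> real) \<Rightarrow> 'j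
     \<Rightarrow> (real^'i^'i) \<times> (real^'j^'i)" where
  "B_pair E mu jhat = (THE (B1, B2). (\<forall>i. B2 $ i $ jhat = 0) \<and>
      (\<forall>(a, b) \<in> Dset. \<forall>i. (\<Sum>j\<in>{j. (i, j) \<in> E}. mu i j * Psi E a b i j) = (B1 *v a + B2 *v b) $ i))"

definition B1 :: "('i::finite \<times> 'j::finite) set \<Rightarrow> ('i \<Rightarrow> 'j \<Rightarrow> real) \<Rightarrow> 'j \<Rightarrow> real^'i^'i" where
  "B1 E mu jhat = fst (B_pair E mu jhat)"

end

theory Submission
  imports Defs
begin

text \<open>
  On a tree an array supported on the edges is determined by its row and column sums: a nonzero
  array with vanishing margins has a support in which every vertex has degree at least two, hence a
  cycle. Orthogonality to the edge vectors then shows that every pair in \<open>Dset\<close> is realised,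
  so \<open>Psi\<close>, \<open>B1\<close> and \<open>B2\<close> are well defined and \<open>B1\<close> is injective.

  The same argument yields positive potentials \<open>v\<close> on \<open>I\<close> and \<open>w\<close> on \<open>J\<close> with
  \<open>v i * mu i j = w j\<close> on every edge and \<open>w jhat = 1\<close>. Weighting the rows of \<open>B1\<close> by \<open>v\<close> turns each
  column into a sum of column sums, so \<open>v\<^sup>T B1 = e\<^sup>T\<close>, i.e.\ \<open>e\<^sup>T B1\<^sup>-\<^sup>1 = v\<^sup>T\<close>. Along any path
  the gain telescopes to the ratio of the potentials at its ends.
\<close>

section \<open>Walks\<close>

fun walk :: "('i \<times> 'j) set \<Rightarrow> ('i + 'j) list \<Rightarrow> bool" where
  "walk E [] = False"
| "walk E [x] = True"
| "walk E (x # y # xs) \<longleftrightarrow> adj E x y \<and> walk E (y # xs)"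

lemma is_walk_iff_walk: "is_walk E p \<longleftrightarrow> walk E p"
proof (induction p rule: walk.induct)
  case (3 E x y xs)
  have "is_walk E (x # y # xs) \<longleftrightarrow> adj E x y \<and> is_walk E (y # xs)"
    unfolding is_walk_def
  proof (intro iffI conjI allI impI; (elim conjE)?)
    fix k assume "\<forall>k. Suc k < length (x # y # xs) \<longrightarrow> adj E ((x # y # xs) ! k) ((x # y # xs) ! Suc k)"
    from this[rule_format, of 0] this[rule_format, of "Suc k"]
    show "adj E x y" and "Suc k < length (y # xs) \<Longrightarrow> adj E ((y # xs) ! k) ((y # xs) ! Suc k)"
      by simp_all
  next
    fix k assume "adj E x y" "\<forall>k. Suc k < length (y # xs) \<longrightarrow> adj E ((y # xs) ! k) ((y # xs) ! Suc k)"
      "Suc k < length (x # y # xs)"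
    then show "adj E ((x # y # xs) ! k) ((x # y # xs) ! Suc k)" by (cases k) auto
  qed simp_all
  with 3 show ?case by simp
qed (auto simp: is_walk_def)

lemma adj_commute: "adj E u v = adj E v u"
  by (cases u; cases v) auto

lemma adj_irrefl: "\<not> adj E u u"
  by (cases u) auto

lemma adj_mono: "S \<subseteq> E \<Longrightarrow> adj S u v \<Longrightarrow> adj E u v"
  by (cases u; cases v) auto

lemma walk_Cons: "walk E (x # xs) \<longleftrightarrow> xs = [] \<or> adj E x (hd xs) \<and> walk E xs"
  by (cases xs) auto

lemma walk_not_Nil: "walk E p \<Longrightarrow> p \<noteq> []"
  by (cases p) auto

lemma walk_mono: "S \<subseteq> E \<Longrightarrow> walk S p \<Longrightarrow> walk E p"
  by (induction p) (auto simp: walk_Cons adj_mono)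

lemma walk_append:
  "walk E (xs @ ys) \<longleftrightarrow>
     (xs = [] \<longrightarrow> walk E ys) \<and> (ys = [] \<longrightarrow> walk E xs) \<and>
     (xs \<noteq> [] \<and> ys \<noteq> [] \<longrightarrow> walk E xs \<and> walk E ys \<and> adj E (last xs) (hd ys))"
  by (induction xs) (auto simp: walk_Cons)

lemma walk_appendD1: "walk E (xs @ ys) \<Longrightarrow> xs \<noteq> [] \<Longrightarrow> walk E xs"
  by (cases "ys = []") (auto simp: walk_append)

lemma walk_appendD2: "walk E (xs @ ys) \<Longrightarrow> ys \<noteq> [] \<Longrightarrow> walk E ys"
  by (cases "xs = []") (auto simp: walk_append)

lemma walk_rev: "walk E xs \<Longrightarrow> walk E (rev xs)"
  by (induction xs) (auto simp: walk_Cons walk_append last_rev adj_commute)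

lemma walk_append_tl:
  assumes "walk E xs" "walk E ys" "last xs = hd ys"
  shows "walk E (xs @ tl ys)"
  using assms by (cases ys) (auto simp: walk_append walk_Cons walk_not_Nil)

lemma walk_invariant:
  assumes "\<And>u v. adj E u v \<Longrightarrow> \<phi> u = \<phi> v" "walk E p"
  shows "\<phi> (hd p) = \<phi> (last p)"
  using assms(2) by (induction p) (auto simp: walk_Cons assms(1))

lemma connected_invariant:
  assumes "graph_connected E" "\<And>u v. adj E u v \<Longrightarrow> \<phi> u = \<phi> v"
  shows "\<phi> u = \<phi> v"
proof -
  obtain p where "is_walk E p" "hd p = u" "last p = v"
    using assms(1) unfolding graph_connected_def by blast
  then show ?thesis using walk_invariant[of E \<phi> p] assms(2) by (simp add: is_walk_iff_walk)
qed

lemma is_cycle_mono: "S \<subseteq> E \<Longrightarrow> is_cycle S c \<Longrightarrow> is_cycle E c"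
  unfolding is_cycle_def is_walk_iff_walk using walk_mono adj_mono by blast

section \<open>Paths and cycles in trees\<close>

lemma cycle_of_diverging_walks:
  assumes dp: "distinct (u # p)" and dq: "distinct (u # q)"
    and wp: "walk E (u # p)" and wq: "walk E (u # q)"
    and ne: "p \<noteq> []" "q \<noteq> []" and hd: "hd p \<noteq> hd q" and last: "last p = last q"
  shows "\<exists>c. is_cycle E c"
proof -
  txt \<open>Close a cycle at the first vertex of \<open>q\<close> that lies on \<open>p\<close>.\<close>
  have "\<exists>x\<in>set q. x \<in> set p" using last ne by (metis last_in_set)
  then obtain qa x qb where qs: "q = qa @ x # qb" and xp: "x \<in> set p" and qa: "\<forall>y\<in>set qa. y \<notin> set p"
    using split_list_first_prop[of q "\<lambda>y. y \<in> set p"] by blast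
  obtain pa pb where ps: "p = pa @ x # pb" using xp split_list by metis
  define c where "c = u # pa @ x # rev qa"
  have "distinct c" using dp dq qa unfolding c_def ps qs by auto
  moreover have "length c \<ge> 3" using hd ps qs unfolding c_def by (cases pa; cases qa) auto
  moreover have "walk E c"
  proof -
    have w1: "walk E (u # pa @ [x])" using walk_appendD1[of E "u # pa @ [x]" pb] wp ps by simp
    have "walk E (qa @ [x])" using walk_appendD1[of E "qa @ [x]" qb] wq ne(2) qs by (simp add: walk_Cons)
    then have w2: "walk E (x # rev qa)" using walk_rev by fastforce
    show ?thesis using walk_append_tl[OF w1 w2] unfolding c_def by simp
  qed
  moreover have "adj E (last c) (hd c)"
    using wq ne(2) qs unfolding c_def by (cases "qa = []") (simp_all add: walk_Cons adj_commute last_rev)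
  ultimately show ?thesis unfolding is_cycle_def is_walk_iff_walk by blast
qed

lemma acyclic_distinct_walks_unique:
  assumes nc: "\<nexists>c. is_cycle E c"
  shows "distinct p \<Longrightarrow> distinct q \<Longrightarrow> walk E p \<Longrightarrow> walk E q \<Longrightarrow>
    hd p = hd q \<Longrightarrow> last p = last q \<Longrightarrow> p = q"
proof (induction p arbitrary: q)
  case Nil then show ?case by simp
next
  case (Cons u p')
  obtain q' where q: "q = u # q'" using Cons.prems walk_not_Nil by (cases q) auto
  consider "p' = [] \<or> q' = []" | "p' \<noteq> []" "q' \<noteq> []" "hd p' = hd q'" | "p' \<noteq> []" "q' \<noteq> []" "hd p' \<noteq> hd q'"
    by blast
  then show ?case
  proof cases
    case 1
    then show ?thesis using Cons.prems q by (auto; metis last_in_set)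
  next
    case 2
    then show ?thesis using Cons.IH[of q'] Cons.prems q by (simp add: walk_Cons)
  next
    case 3
    then show ?thesis using cycle_of_diverging_walks[of u p' q' E] Cons.prems q nc by simp
  qed
qed

lemma shortest_path_distinct:
  assumes "shortest_path E u v p"
  shows "distinct p"
proof (rule ccontr)
  assume "\<not> distinct p"
  then obtain xs ys zs y where p: "p = xs @ [y] @ ys @ [y] @ zs" using not_distinct_decomp by blast
  have wp: "walk E p" using assms by (simp add: shortest_path_def is_walk_iff_walk)
  have "walk E (xs @ [y])" using walk_appendD1[of E "xs @ [y]" "ys @ y # zs"] wp p by simp
  moreover have "walk E (y # zs)" using walk_appendD2[of E "xs @ y # ys" "y # zs"] wp p by simp
  ultimately have "is_walk E (xs @ y # zs)"
    using walk_append_tl[of E "xs @ [y]" "y # zs"] by (simp add: is_walk_iff_walk)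
  moreover have "hd (xs @ y # zs) = u" "last (xs @ y # zs) = v"
    using assms p by (cases xs; cases zs; auto simp: shortest_path_def)+
  ultimately have "length p \<le> length (xs @ y # zs)" using assms unfolding shortest_path_def by blast
  then show False using p by simp
qed

lemma connected_shortest_path_exists:
  assumes "graph_connected E"
  shows "\<exists>p. shortest_path E u v p"
proof -
  obtain p0 where "is_walk E p0 \<and> hd p0 = u \<and> last p0 = v"
    using assms unfolding graph_connected_def by blast
  then show ?thesis
    unfolding shortest_path_def
    using ex_has_least_nat[of "\<lambda>p. is_walk E p \<and> hd p = u \<and> last p = v" p0 length] by blast
qed

lemma tree_shortest_path_unique:
  assumes "is_tree E"
  shows "\<exists>!p. shortest_path E u v p"
proof -
  obtain p where p: "shortest_path E u v p"
    using connected_shortest_path_exists assms is_tree_def by blast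
  moreover have "q = p" if "shortest_path E u v q" for q
    using acyclic_distinct_walks_unique[of E q p] assms
      shortest_path_distinct[OF that] shortest_path_distinct[OF p] that p
    by (simp add: is_tree_def shortest_path_def is_walk_iff_walk)
  ultimately show ?thesis by blast
qed

lemma cycle_if_longest_path_extends:
  assumes pd: "distinct p" and pw: "walk S p" and pl: "length p \<ge> 2"
    and longest: "\<And>q. distinct q \<Longrightarrow> walk S q \<Longrightarrow> length q \<le> length p"
    and deg: "\<And>v. adj S (last p) v \<Longrightarrow> \<exists>v'. v' \<noteq> v \<and> adj S (last p) v'"
  shows "\<exists>c. is_cycle S c"
proof -
  obtain p0 y t where p: "p = p0 @ [y, t]"
  proof -
    obtain t r y where "rev p = t # y # r"
      using pl by (metis Suc_le_length_iff numeral_2_eq_2 length_rev)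
    then show ?thesis
      using that by (metis rev_rev_ident rev.simps append.assoc append_Cons append_Nil)
  qed
  have "adj S t y" using walk_appendD2[of S p0 "[y, t]"] pw p by (simp add: adj_commute)
  then obtain v' where v': "v' \<noteq> y" "adj S t v'" using deg p by auto
  txt \<open>By maximality \<open>v'\<close> lies on \<open>p\<close>, and the segment from \<open>v'\<close> to \<open>t\<close> closes up.\<close>
  show ?thesis
  proof (cases "v' \<in> set p")
    case False
    have "walk S (p @ [v'])" "distinct (p @ [v'])" using pw pd v' p False adj_irrefl[of S t] by (auto simp: walk_append)
    then show ?thesis using longest[of "p @ [v']"] by simp
  next
    case True
    then have "v' \<in> set p0" using v' p adj_irrefl[of S t] by auto
    then obtain a b where p0: "p0 = a @ v' # b" using split_list by metis
    define c where "c = v' # b @ [y, t]"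
    have pc: "p = a @ c" using p p0 c_def by simp
    have "distinct c" using pd pc by simp
    moreover have "walk S c" using walk_appendD2[of S a c] pw pc c_def by simp
    moreover have "length c \<ge> 3" "adj S (last c) (hd c)" using v' unfolding c_def by simp_all
    ultimately show ?thesis unfolding is_cycle_def is_walk_iff_walk by blast
  qed
qed

lemma cycle_if_degree_ge_two:
  fixes S :: "('i::finite \<times> 'j::finite) set"
  assumes ne: "S \<noteq> {}"
    and deg: "\<And>u v. u \<noteq> z \<Longrightarrow> adj S u v \<Longrightarrow> \<exists>v'. v' \<noteq> v \<and> adj S u v'"
  shows "\<exists>c. is_cycle S c"
proof -
  define P where "P = {p :: ('i + 'j) list. distinct p \<and> walk S p}"
  have "length q \<le> CARD('i + 'j)" if "distinct q" for q :: "('i + 'j) list"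
    using that by (metis distinct_card card_mono finite subset_UNIV)
  then have "length ` P \<subseteq> {..CARD('i + 'j)}" unfolding P_def by blast
  then have fin: "finite (length ` P)" using finite_subset by blast
  obtain i j where ij: "(i, j) \<in> S" using ne by auto
  have e: "[Inl i, Inr j] \<in> P" using ij by (simp add: P_def)
  define m where "m = Max (length ` P)"
  have ml: "\<And>q. q \<in> P \<Longrightarrow> length q \<le> m" unfolding m_def using fin by simp
  have "2 \<le> m" using ml[OF e] by simp
  have "m \<in> length ` P" unfolding m_def using fin e by (intro Max_in) auto
  then obtain p where pP: "p \<in> P" and pm: "length p = m" by auto
  have cycle: "\<exists>c. is_cycle S c" if "q \<in> P" "length q = m" "last q \<noteq> z" for q
    using that ml \<open>2 \<le> m\<close> deg[of "last q"] by (intro cycle_if_longest_path_extends[of q]) (auto simp: P_def)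
  txt \<open>A longest path has two distinct ends, so one of them differs from \<open>z\<close>.\<close>
  obtain x r where "p = x # r" "r \<noteq> []" using pm \<open>2 \<le> m\<close> by (cases p; cases "tl p") auto
  then have "hd p \<noteq> last p" "p \<noteq> []" using pP by (auto simp: P_def)
  moreover have "rev p \<in> P" using pP by (simp add: P_def walk_rev)
  ultimately show ?thesis
    using cycle[of p] cycle[of "rev p"] pP pm by (cases "last p = z") (simp_all add: last_rev)
qed

section \<open>Arrays supported on the edges\<close>

definition supported :: "('i \<times> 'j) set \<Rightarrow> ('i \<Rightarrow> 'j \<Rightarrow> real) \<Rightarrow> bool" where
  "supported E x \<longleftrightarrow> (\<forall>i j. (i, j) \<notin> E \<longrightarrow> x i j = 0)"

lemma sum_eq_0_other_nonzero:
  assumes "sum f A = 0" "finite A" "k \<in> A" "f k \<noteq> (0::real)"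
  shows "\<exists>k'\<in>A. k' \<noteq> k \<and> f k' \<noteq> 0"
proof (rule ccontr)
  assume "\<not> ?thesis"
  then have "sum f (A - {k}) = 0" by (intro sum.neutral) auto
  then show False using assms sum.remove[of A k f] by simp
qed

text \<open>In the support of a nonzero array as below every vertex except \<open>Inr j0\<close> has degree at least
  two, so the support contains a cycle.\<close>

lemma acyclic_supported_eq_0:
  fixes E :: "('i::finite \<times> 'j::finite) set" and x :: "'i \<Rightarrow> 'j \<Rightarrow> real"
  assumes nc: "\<nexists>c. is_cycle E c" and sx: "supported E x"
    and cpos: "\<And>i j. (i, j) \<in> E \<Longrightarrow> c i j > 0"
    and rows: "\<And>i. (\<Sum>j\<in>UNIV. c i j * x i j) = 0"
    and cols: "\<And>j. j \<noteq> j0 \<Longrightarrow> (\<Sum>i\<in>UNIV. x i j) = 0"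
  shows "x = (\<lambda>i j. 0)"
proof (rule ccontr)
  assume nz: "x \<noteq> (\<lambda>i j. 0)"
  define S where "S = {(i, j). x i j \<noteq> 0}"
  have SE: "S \<subseteq> E" using sx unfolding supported_def S_def by auto
  have "S \<noteq> {}" using nz unfolding S_def by (auto simp: fun_eq_iff)
  moreover have "\<exists>v'. v' \<noteq> v \<and> adj S u v'" if u: "u \<noteq> Inr j0" and a: "adj S u v" for u v
  proof (cases u)
    case (Inl i)
    then obtain j where v: "v = Inr j" and ij: "x i j \<noteq> 0" using a unfolding S_def by (cases v) auto
    have "c i j * x i j \<noteq> 0" using ij sx cpos unfolding supported_def by force
    then obtain j' where "j' \<noteq> j" "c i j' * x i j' \<noteq> 0" using sum_eq_0_other_nonzero[OF rows[of i]] by auto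
    then show ?thesis using Inl v unfolding S_def by (intro exI[of _ "Inr j'"]) auto
  next
    case (Inr j)
    then obtain i where v: "v = Inl i" and ij: "x i j \<noteq> 0" using a unfolding S_def by (cases v) auto
    have "j \<noteq> j0" using u Inr by simp
    then obtain i' where "i' \<noteq> i" "x i' j \<noteq> 0" using sum_eq_0_other_nonzero[OF cols[of j]] ij by auto
    then show ?thesis using Inr v unfolding S_def by (intro exI[of _ "Inl i'"]) auto
  qed
  ultimately obtain cy where "is_cycle S cy" using cycle_if_degree_ge_two[of S "Inr j0"] by blast
  then show False using nc is_cycle_mono[OF SE] by blast
qed

definition margins ::
  "('i::finite \<Rightarrow> 'j::finite \<Rightarrow> real) \<Rightarrow> ('i \<Rightarrow> 'j \<Rightarrow> real) \<Rightarrow> ('i \<Rightarrow> 'j \<Rightarrow> real) \<Rightarrow> real^('i + 'j)"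
  where "margins c1 c2 x =
    (\<chi> u. case u of Inl i \<Rightarrow> \<Sum>j\<in>UNIV. c1 i j * x i j | Inr j \<Rightarrow> \<Sum>i\<in>UNIV. c2 i j * x i j)"

definition edge_indicator :: "'i \<times> 'j \<Rightarrow> 'i \<Rightarrow> 'j \<Rightarrow> real" where
  "edge_indicator e = (\<lambda>i j. if (i, j) = e then 1 else 0)"

lemma margins_Inl [simp]: "margins c1 c2 x $ Inl i = (\<Sum>j\<in>UNIV. c1 i j * x i j)"
  by (simp add: margins_def)

lemma margins_Inr [simp]: "margins c1 c2 x $ Inr j = (\<Sum>i\<in>UNIV. c2 i j * x i j)"
  by (simp add: margins_def)

lemma margins_edge_indicator:
  "margins c1 c2 (edge_indicator (i, j)) = c1 i j *\<^sub>R axis (Inl i) 1 + c2 i j *\<^sub>R axis (Inr j) 1"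
proof (subst vec_eq_iff, intro allI)
  fix u
  show "margins c1 c2 (edge_indicator (i, j)) $ u = (c1 i j *\<^sub>R axis (Inl i) 1 + c2 i j *\<^sub>R axis (Inr j) 1) $ u"
    by (cases u) (auto simp: edge_indicator_def axis_def if_distrib cong: if_cong)
qed

lemma inner_margins_edge_indicator:
  "n \<bullet> margins c1 c2 (edge_indicator (i, j)) = c1 i j * n $ Inl i + c2 i j * n $ Inr j"
  by (simp add: margins_edge_indicator inner_add_right inner_axis)

lemma span_margins_edge_indicator:
  assumes "z \<in> span ((\<lambda>e. margins c1 c2 (edge_indicator e)) ` E)"
  shows "\<exists>x. supported E x \<and> margins c1 c2 x = z"
proof -
  define R where "R = {margins c1 c2 x | x. supported E x}"
  have "subspace R"
    unfolding subspace_def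
  proof (intro conjI ballI allI)
    show "0 \<in> R" unfolding R_def
      by (intro CollectI exI[of _ "\<lambda>i j. 0"]) (simp add: supported_def vec_eq_iff margins_def split: sum.split)
  next
    fix y1 y2 assume "y1 \<in> R" "y2 \<in> R"
    then obtain x1 x2 where "supported E x1" "y1 = margins c1 c2 x1" "supported E x2" "y2 = margins c1 c2 x2"
      unfolding R_def by blast
    then show "y1 + y2 \<in> R" unfolding R_def
      by (intro CollectI exI[of _ "\<lambda>i j. x1 i j + x2 i j"])
         (auto simp: supported_def vec_eq_iff margins_def distrib_left sum.distrib split: sum.split)
  next
    fix r :: real and y assume "y \<in> R"
    then obtain x where "supported E x" "y = margins c1 c2 x" unfolding R_def by blast
    then show "r *\<^sub>R y \<in> R" unfolding R_def
      by (intro CollectI exI[of _ "\<lambda>i j. r * x i j"])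
         (auto simp: supported_def vec_eq_iff margins_def sum_distrib_left algebra_simps split: sum.split)
  qed
  moreover have "(\<lambda>e. margins c1 c2 (edge_indicator e)) ` E \<subseteq> R"
    unfolding R_def by (auto simp: supported_def edge_indicator_def)
  ultimately show ?thesis using assms span_minimal[of _ R] unfolding R_def by blast
qed

lemma nonzero_orthogonal_outside_span:
  fixes z :: "'a::euclidean_space"
  assumes "z \<notin> span S"
  obtains n where "n \<noteq> 0" "n \<in> span (insert z S)" "\<And>y. y \<in> S \<Longrightarrow> n \<bullet> y = 0"
proof -
  have "span S \<subset> span (insert z S)"
    using assms span_mono[of S "insert z S"] span_base[of z "insert z S"] by blast
  then obtain n where "n \<noteq> 0" "n \<in> span (insert z S)" "\<And>y. y \<in> span S \<Longrightarrow> orthogonal n y"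
    using orthogonal_to_subspace_exists_gen by blast
  then show ?thesis using that span_base unfolding orthogonal_def by blast
qed

definition has_margins ::
  "('i::finite \<times> 'j::finite) set \<Rightarrow> real^'i \<Rightarrow> real^'j \<Rightarrow> ('i \<Rightarrow> 'j \<Rightarrow> real) \<Rightarrow> bool"
  where "has_margins E a b x \<longleftrightarrow> supported E x \<and>
    (\<forall>i. (\<Sum>j\<in>UNIV. x i j) = a $ i) \<and> (\<forall>j. (\<Sum>i\<in>UNIV. x i j) = b $ j)"

lemma has_margins_Dset: "has_margins E a b x \<Longrightarrow> (a, b) \<in> Dset"
  unfolding has_margins_def Dset_def using sum.swap[of "\<lambda>i j. x i j" UNIV UNIV] by auto

text \<open>If \<open>(a, b)\<close> were not a margin vector, some nonzero \<open>n\<close> with equal sums over both sides would be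
  orthogonal to the margins of every edge, i.e.\ \<open>n (Inl i) + n (Inr j) = 0\<close> on edges; on a
  connected graph this makes \<open>n\<close> equal to \<open>c\<close> on \<open>I\<close> and to \<open>-c\<close> on \<open>J\<close>, forcing \<open>c = 0\<close>.\<close>

lemma connected_has_margins_exists:
  fixes E :: "('i::finite \<times> 'j::finite) set"
  assumes conn: "graph_connected E" and D: "(a, b) \<in> Dset"
  shows "\<exists>x. has_margins E a b x"
proof -
  define one :: "'i \<Rightarrow> 'j \<Rightarrow> real" where "one = (\<lambda>_ _. 1)"
  define z :: "real^('i + 'j)" where "z = (\<chi> u. case u of Inl i \<Rightarrow> a $ i | Inr j \<Rightarrow> b $ j)"
  define G where "G = (\<lambda>e. margins one one (edge_indicator e)) ` E"
  have "z \<in> span G"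
  proof (rule ccontr)
    assume "z \<notin> span G"
    then obtain n where nz: "n \<noteq> 0" and nsp: "n \<in> span (insert z G)" and orth: "\<And>y. y \<in> G \<Longrightarrow> n \<bullet> y = 0"
      using nonzero_orthogonal_outside_span by blast
    define D' where "D' = {y :: real^('i + 'j). (\<Sum>i\<in>UNIV. y $ Inl i) = (\<Sum>j\<in>UNIV. y $ Inr j)}"
    have "subspace D'" unfolding subspace_def D'_def by (auto simp: sum.distrib simp flip: sum_distrib_left)
    moreover have "insert z G \<subseteq> D'"
      using D by (auto simp: D'_def z_def Dset_def G_def margins_edge_indicator one_def axis_def)
    ultimately have nD: "n \<in> D'" using nsp span_minimal by blast
    have edge: "n $ Inl i + n $ Inr j = 0" if "(i, j) \<in> E" for i j
      using orth[of "margins one one (edge_indicator (i, j))"] that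
      by (simp add: G_def inner_margins_edge_indicator one_def)
    define \<phi> where "\<phi> u = (case u of Inl i \<Rightarrow> n $ Inl i | Inr j \<Rightarrow> - n $ Inr j)" for u
    have "\<phi> u = \<phi> v" if "adj E u v" for u v
      using that edge by (cases u; cases v) (auto simp: \<phi>_def add_eq_0_iff)
    then have "\<phi> u = \<phi> (Inl undefined)" for u using connected_invariant[OF conn] by blast
    then obtain c where nl: "\<And>i. n $ Inl i = c" and nr: "\<And>j. n $ Inr j = - c"
      unfolding \<phi>_def by (metis minus_minus sum.case)
    have "(real CARD('i) + real CARD('j)) * c = 0" using nD by (simp add: D'_def nl nr algebra_simps)
    moreover have "real CARD('i) + real CARD('j) > 0" by (simp add: add_pos_pos)
    ultimately have "c = 0" by simp
    then have "n = 0" using nl nr by (simp add: vec_eq_iff) (metis sum.exhaust)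
    with nz show False by simp
  qed
  then obtain x where "supported E x" and xz: "margins one one x = z"
    unfolding G_def using span_margins_edge_indicator by blast
  moreover have "(\<Sum>j\<in>UNIV. x i j) = a $ i" "(\<Sum>i\<in>UNIV. x i j) = b $ j" for i j
    using arg_cong[OF xz, of "\<lambda>y. y $ Inl i"] arg_cong[OF xz, of "\<lambda>y. y $ Inr j"]
    by (simp_all add: one_def z_def)
  ultimately show ?thesis unfolding has_margins_def by blast
qed

lemma acyclic_has_margins_unique:
  fixes E :: "('i::finite \<times> 'j::finite) set"
  assumes nc: "\<nexists>c. is_cycle E c" and x: "has_margins E a b x" and y: "has_margins E a b y"
  shows "x = y"
proof -
  define d where "d = (\<lambda>i j. x i j - y i j)"
  have "supported E d" "\<And>i. (\<Sum>j\<in>UNIV. 1 * d i j) = 0" "\<And>j. (\<Sum>i\<in>UNIV. d i j) = 0"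
    using x y by (simp_all add: has_margins_def supported_def d_def sum_subtractf)
  then have "d = (\<lambda>i j. 0)" using acyclic_supported_eq_0[OF nc, of d "\<lambda>_ _. 1" undefined] by simp
  then show ?thesis by (auto simp: d_def fun_eq_iff)
qed

lemma Psi_has_margins:
  assumes tree: "is_tree E" and D: "(a, b) \<in> Dset"
  shows "has_margins E a b (Psi E a b)"
proof -
  have "\<exists>!x. has_margins E a b x"
    using connected_has_margins_exists[OF _ D] acyclic_has_margins_unique tree
    unfolding is_tree_def by metis
  then show ?thesis unfolding Psi_def has_margins_def supported_def by (rule theI')
qed

lemma Psi_eqI:
  assumes "is_tree E" "has_margins E a b x"
  shows "Psi E a b = x"
  using assms Psi_has_margins[OF _ has_margins_Dset] acyclic_has_margins_unique
  unfolding is_tree_def by metis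

section \<open>Potentials and gains\<close>

lemma acyclic_axis_notin_span_margins:
  fixes E :: "('i::finite \<times> 'j::finite) set"
  assumes nc: "\<nexists>c. is_cycle E c" and mu_pos: "\<And>i j. (i, j) \<in> E \<Longrightarrow> mu i j > 0"
  shows "axis (Inr jhat) 1 \<notin> span ((\<lambda>e. margins mu (\<lambda>_ _. -1) (edge_indicator e)) ` E)"
proof
  assume "axis (Inr jhat) 1 \<in> span ((\<lambda>e. margins mu (\<lambda>_ _. -1) (edge_indicator e)) ` E)"
  then obtain x where sx: "supported E x" and xz: "margins mu (\<lambda>_ _. -1) x = axis (Inr jhat) 1"
    using span_margins_edge_indicator by blast
  have rows: "(\<Sum>j\<in>UNIV. mu i j * x i j) = 0" for i
    using arg_cong[OF xz, of "\<lambda>y. y $ Inl i"] by (simp add: axis_def)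
  have cols: "(\<Sum>i\<in>UNIV. x i j) = (if j = jhat then -1 else 0)" for j
    using arg_cong[OF xz, of "\<lambda>y. y $ Inr j"] by (auto simp: axis_def sum_negf split: if_splits)
  have "x = (\<lambda>i j. 0)" using acyclic_supported_eq_0[OF nc sx mu_pos rows, of jhat] cols by simp
  then show False using cols[of jhat] by simp
qed

text \<open>A nonzero \<open>n\<close> orthogonal to all edge margins for the weights \<open>(mu, -1)\<close> satisfies
  \<open>n (Inr j) = mu i j * n (Inl i)\<close> on edges, so its sign is constant on the connected graph.\<close>

lemma tree_positive_potential:
  fixes E :: "('i::finite \<times> 'j::finite) set" and mu :: "'i \<Rightarrow> 'j \<Rightarrow> real"
  assumes tree: "is_tree E" and mu_pos: "\<And>i j. (i, j) \<in> E \<Longrightarrow> mu i j > 0"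
  obtains v w where "\<And>i. v i > 0" "w jhat = 1" "\<And>i j. (i, j) \<in> E \<Longrightarrow> v i * mu i j = w j"
proof -
  have conn: "graph_connected E" and nc: "\<nexists>c. is_cycle E c" using tree by (auto simp: is_tree_def)
  obtain n where nz: "n \<noteq> 0"
    and orth: "\<And>y. y \<in> (\<lambda>e. margins mu (\<lambda>_ _. -1) (edge_indicator e)) ` E \<Longrightarrow> n \<bullet> y = 0"
    using nonzero_orthogonal_outside_span[OF acyclic_axis_notin_span_margins[where mu = mu and jhat = jhat, OF nc mu_pos]] by blast
  have edge: "n $ Inr j = mu i j * n $ Inl i" if "(i, j) \<in> E" for i j
    using orth[of "margins mu (\<lambda>_ _. -1) (edge_indicator (i, j))"] that
    by (simp add: inner_margins_edge_indicator)
  have "sgn (n $ u) = sgn (n $ v)" if "adj E u v" for u v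
    using that edge mu_pos by (cases u; cases v) (auto simp: sgn_mult)
  then have sgn_eq: "sgn (n $ u) = sgn (n $ Inr jhat)" for u
    by (rule connected_invariant[OF conn])
  define s where "s = n $ Inr jhat"
  obtain u0 where "n $ u0 \<noteq> 0" using nz by (auto simp: vec_eq_iff)
  then have "s \<noteq> 0" using sgn_eq[of u0] by (auto simp: s_def sgn_0_0)
  then have pos: "n $ u / s > 0" for u
    using sgn_eq[of u] by (auto simp: s_def zero_less_divide_iff sgn_if split: if_splits)
  show ?thesis
  proof
    show "n $ Inl i / s > 0" for i by (rule pos)
    show "n $ Inr jhat / s = 1" using \<open>s \<noteq> 0\<close> by (simp add: s_def)
    show "n $ Inl i / s * mu i j = n $ Inr j / s" if "(i, j) \<in> E" for i j
      using edge[OF that] by simp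
  qed
qed

lemma path_gain_potential:
  assumes vpos: "\<And>i. v i > 0" and pot: "\<And>i j. (i, j) \<in> E \<Longrightarrow> v i * mu i j = w j"
    and mu_pos: "\<And>i j. (i, j) \<in> E \<Longrightarrow> mu i j > 0"
  shows "walk E p \<Longrightarrow> hd p = Inl a \<Longrightarrow> last p = Inl b \<Longrightarrow> path_gain mu p = v b / v a"
  using pot mu_pos
proof (induction mu p arbitrary: a rule: path_gain.induct)
  case (1 mu i j i' rest)
  note pot = "1.prems"(4) and mu_pos = "1.prems"(5)
  from "1.prems"(1) have ij: "(i, j) \<in> E" and i'j: "(i', j) \<in> E" and w: "walk E (Inl i' # rest)"
    by auto
  have "v i * mu i j = v i' * mu i' j" using pot[OF ij] pot[OF i'j] by simp
  then have "mu i j / mu i' j = v i' / v i" using mu_pos[OF i'j] vpos[of i] by (simp add: field_simps)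
  moreover have "path_gain mu (Inl i' # rest) = v b / v i'" using "1.IH"[OF w _ _ pot mu_pos] "1.prems"(3) by simp
  ultimately show ?case using "1.prems"(2) vpos[of i'] by simp
qed (use vpos in \<open>auto simp: less_imp_neq[symmetric] elim: adj.elims\<close>)

lemma gain_potential:
  assumes tree: "is_tree E" and vpos: "\<And>i. v i > 0"
    and pot: "\<And>i j. (i, j) \<in> E \<Longrightarrow> v i * mu i j = w j"
    and mu_pos: "\<And>i j. (i, j) \<in> E \<Longrightarrow> mu i j > 0"
  shows "gain E mu i l = v l / v i"
proof (cases "i = l")
  case True
  then show ?thesis using vpos[of i] by (simp add: gain_def)
next
  case False
  define p where "p = (THE p. shortest_path E (Inl i) (Inl l) p)"
  have "shortest_path E (Inl i) (Inl l) p"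
    unfolding p_def by (rule theI'[OF tree_shortest_path_unique[OF tree]])
  then have "walk E p" "hd p = Inl i" "last p = Inl l"
    by (simp_all add: shortest_path_def is_walk_iff_walk)
  then show ?thesis
    using False path_gain_potential[OF vpos pot mu_pos] by (simp add: gain_def p_def)
qed

section \<open>The matrices B1 and B2\<close>

definition service_rate ::
  "('i::finite \<times> 'j::finite) set \<Rightarrow> ('i \<Rightarrow> 'j \<Rightarrow> real) \<Rightarrow> real^'i \<Rightarrow> real^'j \<Rightarrow> 'i \<Rightarrow> real"
  where "service_rate E mu a b i = (\<Sum>j\<in>{j. (i, j) \<in> E}. mu i j * Psi E a b i j)"

text \<open>Column \<open>i'\<close> of \<open>B1\<close> is the response to \<open>(e i', e jhat)\<close> and column \<open>j\<close> of \<open>B2\<close> the response to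
  \<open>(0, e j - e jhat)\<close>; every \<open>(a, b) \<in> Dset\<close> is the combination of these with coefficients \<open>a\<close> and \<open>b\<close>.\<close>

definition B1_explicit :: "('i::finite \<times> 'j::finite) set \<Rightarrow> ('i \<Rightarrow> 'j \<Rightarrow> real) \<Rightarrow> 'j \<Rightarrow> real^'i^'i" where
  "B1_explicit E mu jhat = (\<chi> i i'. service_rate E mu (axis i' 1) (axis jhat 1) i)"

definition B2_explicit :: "('i::finite \<times> 'j::finite) set \<Rightarrow> ('i \<Rightarrow> 'j \<Rightarrow> real) \<Rightarrow> 'j \<Rightarrow> real^'j^'i" where
  "B2_explicit E mu jhat = (\<chi> i j. service_rate E mu 0 (axis j 1 - axis jhat 1) i)"

lemma Dset_axis_axis: "(axis i 1 :: real^'i::finite, axis j 1 :: real^'j::finite) \<in> Dset"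
  by (simp add: Dset_def axis_def)

lemma Dset_zero_axis_diff: "(0 :: real^'i::finite, axis j 1 - axis j' 1 :: real^'j::finite) \<in> Dset"
  by (simp add: Dset_def axis_def sum_subtractf)

lemma sum_swap_mult: "(\<Sum>j\<in>A. \<Sum>k\<in>B. c k * g k j) = (\<Sum>k\<in>B. (c k :: real) * (\<Sum>j\<in>A. g k j))"
  by (subst sum.swap) (simp add: sum_distrib_left)

lemma Psi_decompose:
  fixes E :: "('i::finite \<times> 'j::finite) set"
  assumes tree: "is_tree E" and D: "(a, b) \<in> Dset"
  shows "Psi E a b = (\<lambda>i j. (\<Sum>i'\<in>UNIV. a $ i' * Psi E (axis i' 1) (axis jhat 1) i j)
                          + (\<Sum>j'\<in>UNIV. b $ j' * Psi E 0 (axis j' 1 - axis jhat 1) i j))"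
    (is "_ = (\<lambda>i j. (\<Sum>i'\<in>UNIV. a $ i' * ?P1 i' i j) + (\<Sum>j'\<in>UNIV. b $ j' * ?P2 j' i j))")
proof (rule Psi_eqI[OF tree])
  have m1: "has_margins E (axis i' 1) (axis jhat 1) (?P1 i')" for i'
    by (rule Psi_has_margins[OF tree Dset_axis_axis])
  have m2: "has_margins E 0 (axis j' 1 - axis jhat 1) (?P2 j')" for j'
    by (rule Psi_has_margins[OF tree Dset_zero_axis_diff])
  have r1: "(\<Sum>j\<in>UNIV. ?P1 i' i j) = (if i = i' then 1 else 0)"
    and c1: "(\<Sum>i\<in>UNIV. ?P1 i' i j) = (if j = jhat then 1 else 0)" for i i' j
    using m1[of i'] by (simp_all add: has_margins_def axis_def)
  have r2: "(\<Sum>j\<in>UNIV. ?P2 j' i j) = 0"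
    and c2: "(\<Sum>i\<in>UNIV. ?P2 j' i j) = (if j = j' then 1 else 0) - (if j = jhat then 1 else 0)" for i j j'
    using m2[of j'] by (simp_all add: has_margins_def axis_def)
  have rows: "(\<Sum>j\<in>UNIV. (\<Sum>i'\<in>UNIV. a $ i' * ?P1 i' i j) + (\<Sum>j'\<in>UNIV. b $ j' * ?P2 j' i j)) = a $ i" for i
    by (simp add: sum.distrib sum_swap_mult r1 r2 if_distrib cong: if_cong)
  have b: "(\<Sum>j'\<in>UNIV. b $ j' * ((if j = j' then 1 else 0) - (if j = jhat then 1 else 0)))
      = b $ j - (\<Sum>j'\<in>UNIV. b $ j') * (if j = jhat then 1 else 0)" for j
    by (simp add: right_diff_distrib sum_subtractf if_distrib[of "\<lambda>x. _ * x"] cong: if_cong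
        flip: sum_distrib_right)
  have "(\<Sum>i\<in>UNIV. (\<Sum>i'\<in>UNIV. a $ i' * ?P1 i' i j) + (\<Sum>j'\<in>UNIV. b $ j' * ?P2 j' i j))
      = (\<Sum>i'\<in>UNIV. a $ i') * (if j = jhat then 1 else 0) + b $ j
        - (\<Sum>j'\<in>UNIV. b $ j') * (if j = jhat then 1 else 0)" for j
    by (simp only: sum.distrib sum_swap_mult c1 c2 b flip: sum_distrib_right)
  then have cols: "(\<Sum>i\<in>UNIV. (\<Sum>i'\<in>UNIV. a $ i' * ?P1 i' i j) + (\<Sum>j'\<in>UNIV. b $ j' * ?P2 j' i j)) = b $ j" for j
    using D by (simp add: Dset_def)
  show "has_margins E a b (\<lambda>i j. (\<Sum>i'\<in>UNIV. a $ i' * ?P1 i' i j) + (\<Sum>j'\<in>UNIV. b $ j' * ?P2 j' i j))"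
    using m1 m2 rows cols by (simp add: has_margins_def supported_def)
qed

lemma service_rate_eq_sum:
  assumes "is_tree E" "(a, b) \<in> Dset"
  shows "service_rate E mu a b i = (\<Sum>j\<in>UNIV. mu i j * Psi E a b i j)"
  unfolding service_rate_def
  using Psi_has_margins[OF assms] by (intro sum.mono_neutral_left) (auto simp: has_margins_def supported_def)

lemma service_rate_eq_B_explicit:
  fixes E :: "('i::finite \<times> 'j::finite) set"
  assumes tree: "is_tree E" and D: "(a, b) \<in> Dset"
  shows "service_rate E mu a b i = (B1_explicit E mu jhat *v a + B2_explicit E mu jhat *v b) $ i"
  unfolding service_rate_def Psi_decompose[OF tree D, of jhat]
  by (simp add: B1_explicit_def B2_explicit_def service_rate_def matrix_vector_mult_def
      sum.distrib distrib_left sum_distrib_left algebra_simps sum.swap[of _ "{j. (i, j) \<in> E}"])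

lemma Psi_zero: "is_tree E \<Longrightarrow> Psi E 0 0 = (\<lambda>i j. 0)"
  by (rule Psi_eqI) (auto simp: has_margins_def supported_def)

lemma B2_explicit_jhat: "is_tree E \<Longrightarrow> B2_explicit E mu jhat $ i $ jhat = 0"
  by (simp add: B2_explicit_def service_rate_def Psi_zero)

lemma B_pair_eq:
  fixes E :: "('i::finite \<times> 'j::finite) set"
  assumes tree: "is_tree E"
  shows "B_pair E mu jhat = (B1_explicit E mu jhat, B2_explicit E mu jhat)"
  unfolding B_pair_def
proof (rule the_equality, goal_cases)
  case 1
  show ?case using service_rate_eq_B_explicit[OF tree] B2_explicit_jhat[OF tree]
    unfolding service_rate_def by auto
next
  case (2 p)
  obtain X1 X2 where p: "p = (X1, X2)" by (cases p)
  have X2: "X2 $ i $ jhat = 0" for i using 2 p by simp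
  have X: "service_rate E mu a b i = (X1 *v a + X2 *v b) $ i" if "(a, b) \<in> Dset" for a b i
    using 2 p that unfolding service_rate_def by auto
  have "X1 $ i $ i' = B1_explicit E mu jhat $ i $ i'" for i i'
    using X[OF Dset_axis_axis, of i' jhat i] X2[of i]
    by (simp add: B1_explicit_def matrix_vector_mult_basis column_def)
  moreover have "X2 $ i $ j = B2_explicit E mu jhat $ i $ j" for i j
    using X[OF Dset_zero_axis_diff, of j jhat i] X2[of i]
    by (simp add: B2_explicit_def matrix_vector_mult_basis column_def matrix_vector_mult_diff_distrib)
  ultimately show ?case using p by (simp add: vec_eq_iff)
qed

lemma B1_eq_B1_explicit: "is_tree E \<Longrightarrow> B1 E mu jhat = B1_explicit E mu jhat"
  by (simp add: B1_def B_pair_eq)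

text \<open>A kernel vector \<open>\<alpha>\<close> of \<open>B1\<close>, paired with \<open>\<beta> = (\<Sum>\<alpha>) e jhat\<close>, yields an array supported on the
  tree with zero weighted row sums and zero column sums off \<open>jhat\<close>; such an array vanishes.\<close>

lemma B1_explicit_kernel:
  fixes E :: "('i::finite \<times> 'j::finite) set"
  assumes tree: "is_tree E" and mu_pos: "\<And>i j. (i, j) \<in> E \<Longrightarrow> mu i j > 0"
    and ker: "B1_explicit E mu jhat *v \<alpha> = 0"
  shows "\<alpha> = 0"
proof -
  define b :: "real^'j" where "b = (\<Sum>i\<in>UNIV. \<alpha> $ i) *\<^sub>R axis jhat 1"
  have D: "(\<alpha>, b) \<in> Dset"
    by (simp add: Dset_def b_def axis_def if_distrib[of "\<lambda>x. _ * x"] cong: if_cong)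
  define x where "x = Psi E \<alpha> b"
  have x: "has_margins E \<alpha> b x" unfolding x_def by (rule Psi_has_margins[OF tree D])
  have "(\<Sum>j\<in>UNIV. mu i j * x i j) = 0" for i
    using service_rate_eq_B_explicit[OF tree D, where mu = mu and i = i and jhat = jhat]
      service_rate_eq_sum[OF tree D, of mu i] ker B2_explicit_jhat[OF tree]
    by (simp add: x_def b_def matrix_vector_mult_scaleR matrix_vector_mult_basis column_def)
  moreover have "(\<Sum>i\<in>UNIV. x i j) = 0" if "j \<noteq> jhat" for j
    using x that by (simp add: has_margins_def b_def axis_def)
  ultimately have "x = (\<lambda>i j. 0)"
    using acyclic_supported_eq_0[of E x] tree mu_pos x by (auto simp: is_tree_def has_margins_def)
  then show ?thesis using x by (simp add: has_margins_def vec_eq_iff)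
qed

lemma invertible_B1_explicit:
  assumes "is_tree E" "\<And>i j. (i, j) \<in> E \<Longrightarrow> mu i j > 0"
  shows "invertible (B1_explicit E mu jhat)"
  unfolding invertible_left_inverse matrix_left_invertible_ker
  using B1_explicit_kernel[where E = E and mu = mu and jhat = jhat, OF assms] by blast

lemma potential_vector_matrix_B1_explicit:
  fixes E :: "('i::finite \<times> 'j::finite) set"
  assumes tree: "is_tree E" and w1: "w jhat = 1"
    and pot: "\<And>i j. (i, j) \<in> E \<Longrightarrow> v i * mu i j = w j"
  shows "(\<chi> i. v i) v* B1_explicit E mu jhat = (\<chi> k. 1)"
proof (subst vec_eq_iff, intro allI)
  fix i'
  define x where "x = Psi E (axis i' 1 :: real^'i) (axis jhat 1 :: real^'j)"
  have x: "has_margins E (axis i' 1) (axis jhat 1) x"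
    unfolding x_def by (rule Psi_has_margins[OF tree Dset_axis_axis])
  have vx: "v i * (mu i j * x i j) = w j * x i j" for i j
    using pot[of i j] x by (cases "(i, j) \<in> E") (auto simp: has_margins_def supported_def)
  have "((\<chi> i. v i) v* B1_explicit E mu jhat) $ i' = (\<Sum>i\<in>UNIV. v i * (\<Sum>j\<in>UNIV. mu i j * x i j))"
    by (simp add: vector_matrix_mult_def B1_explicit_def service_rate_eq_sum[OF tree Dset_axis_axis] x_def)
  also have "\<dots> = (\<Sum>j\<in>UNIV. w j * (\<Sum>i\<in>UNIV. x i j))"
    unfolding sum_distrib_left vx by (rule sum.swap)
  also have "\<dots> = 1"
    using x w1 by (simp add: has_margins_def axis_def if_distrib[of "\<lambda>x. _ * x"] cong: if_cong)
  finally show "((\<chi> i. v i) v* B1_explicit E mu jhat) $ i' = (\<chi> k. 1) $ i'" by simp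
qed

lemma matrix_inv_right: "invertible A \<Longrightarrow> A ** matrix_inv A = mat 1"
  unfolding invertible_def matrix_inv_def by (rule someI_ex[THEN conjunct1])

theorem theorem3:
  fixes E :: "('i::finite \<times> 'j::finite) set"
    and mu :: "'i \<Rightarrow> 'j \<Rightarrow> real"
    and ihat :: 'i and jhat :: 'j
  assumes tree: "is_tree E"
    and mu_pos: "\<And>i j. (i, j) \<in> E \<Longrightarrow> mu i j > 0"
    and "(ihat, jhat) \<in> E" \<comment> \<open>not needed: \<open>B1\<close> depends on \<open>jhat\<close> only\<close>
  shows "invertible (B1 E mu jhat)
    \<and> (\<forall>i l. gain E mu i l
           = ((\<chi> k. 1) v* matrix_inv (B1 E mu jhat)) $ l / ((\<chi> k. 1) v* matrix_inv (B1 E mu jhat)) $ i)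
    \<and> (\<forall>i. ((\<chi> k. 1) v* matrix_inv (B1 E mu jhat)) $ i > 0)"
proof -
  obtain v w where vpos: "\<And>i. v i > 0" and w1: "w jhat = 1"
    and pot: "\<And>i j. (i, j) \<in> E \<Longrightarrow> v i * mu i j = w j"
    using tree_positive_potential[where E = E and mu = mu and jhat = jhat, OF tree mu_pos] by blast
  define B where "B = B1 E mu jhat"
  have inv: "invertible B"
    unfolding B_def B1_eq_B1_explicit[OF tree] using invertible_B1_explicit[OF tree mu_pos] .
  have "(\<chi> k. 1) v* matrix_inv B = ((\<chi> i. v i) v* B) v* matrix_inv B"
    using potential_vector_matrix_B1_explicit[where v = v and mu = mu, OF tree w1 pot]
    by (simp add: B_def B1_eq_B1_explicit[OF tree])
  also have "\<dots> = (\<chi> i. v i)" by (simp add: vector_matrix_mul_assoc matrix_inv_right[OF inv])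
  finally have "(\<chi> k. 1) v* matrix_inv B = (\<chi> i. v i)" .
  then show ?thesis
    using inv vpos gain_potential[OF tree vpos pot mu_pos] unfolding B_def by simp
qed

end
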